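(* For every $(w,x,y,z)\in X\setminus\{(3,3,3,3)\}$, up to conjugation we have $$ A=\rho(\alpha)= \begin{pmatrix} 0 & 0 & 1& 0 \\ 1 & 0 & 0 & 0 \\ 0 & 1 & 0 & 0 \\ 0 & 0 & 0 & 1 \end{pmatrix} \qquad \textrm{ and }\qquad AC=\rho(\alpha\gamma)= \begin{pmatrix} \lambda_1 & 0 & 0 & 0 \\ 0 & \lambda_2 & 0 & 0 \\ 0 & 0 & \lambda_3 & 0 \\ 0 & 0 & 0 & 1 \end{pmatrix} $$ with $\lambda_i\in \mathbb{R}$, $\lambda_i>0$ and $\lambda_1\neq \pm 1$.
   Context: Let $O$ be the hyperbolic 3--orbifold obtained from the one-tetrahedron, two-vertex triangulation of $S^3$ by deleting the vertices and modelling edge neighbourhoods on $\mathbb{R}^3/\langle r\rangle$, $r$ a rotation by $120^\circ$. Writing the ideal simplex as $[v_1,v_2,v_3,v_4]$ with face pairings $\alpha[v_1,v_2,v_3]=[v_1,v_2,v_4]$ and $\beta[v_2,v_3,v_4]=[v_1,v_3,v_4]$, one has $\pi_1^{orb}(O)=\langle \alpha,\beta : \alpha^3=\beta^3=(\alpha\beta\alpha^{-1}\beta^{-1})^3=1\rangle$. Set $\gamma=[\alpha,\beta]=\alpha\beta\alpha^{-1}\beta^{-1}$. Real projective structures on $O$ modelled on a 3--simplex have holonomy $\rho$ with (up to conjugacy) $$A=\rho(\alpha)=\begin{pmatrix} 1 & 0 & 0 & a_1 \\ 0 & 1 & 0 & a_2 \\ 0 & 0 & 0 & -1\\ 0 &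 0 & 1 & -1 \end{pmatrix},\quad B=\rho(\beta)=\begin{pmatrix} -1 & 1 & 0 & 0 \\ -1 & 0 & 0 & 0 \\ b_3 & 0 & 1 & 0\\ b_4 & 0 & 0 & 1 \end{pmatrix},$$ where $(a_1+a_2)(b_3+b_4)=3+a_1a_2b_3b_4$, and $C=ABA^{-1}B^{-1}=\rho(\gamma)$. The parameters are $w=a_1b_4$, $x=a_1b_3$, $y=a_2b_3$, $z=a_2b_4$ (equivalently $w=2+\operatorname{tr}AB$, $x=2+\operatorname{tr}A^{-1}B$, $y=2+\operatorname{tr}A^{-1}B^{-1}$, $z=2+\operatorname{tr}AB^{-1}$). $X$ denotes the connected component, containing $(3,3,3,3)$, of the set of $(w,x,y,z)\in\mathbb{R}^4$ satisfying $w+x+y+z=3+wy$ and $wy=zx$; it is distinguished from the other component by $x>1$ and $z>1$. The point $(3,3,3,3)$ corresponds to the complete hyperbolic structure on $O$. The stabilizer of $v_1$ is generated by $\alpha,\gamma$ (a $(3,3,3)$-turnover group), whose maximal torsion-free subgroup is $\langle\alpha\gamma,\gamma\alpha\rangle\cong\mathbb{Z}^2$. *)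

theory Defs
  imports "HOL-Analysis.Analysis"
begin

definition Xvar :: "(real \<times> real \<times> real \<times> real) set" where
  "Xvar = {(w,x,y,z). w + x + y + z = 3 + w*y \<and> w*y = z*x}"

definition Xcomp :: "(real \<times> real \<times> real \<times> real) set" where
  "Xcomp = connected_component_set Xvar (3,3,3,3)"

text \<open>Holonomy matrices rho(alpha), rho(beta), rho(gamma) = [A,B].\<close>
definition matA :: "real \<Rightarrow> real \<Rightarrow> real^4^4" where
  "matA a1 a2 = vector [vector [1,0,0,a1], vector [0,1,0,a2],
                        vector [0,0,0,-1], vector [0,0,1,-1]]"

definition matB :: "real \<Rightarrow> real \<Rightarrow> real^4^4" where
  "matB b3 b4 = vector [vector [-1,1,0,0], vector [-1,0,0,0],
                        vector [b3,0,1,0], vector [b4,0,0,1]]"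

definition matC :: "real \<Rightarrow> real \<Rightarrow> real \<Rightarrow> real \<Rightarrow> real^4^4" where
  "matC a1 a2 b3 b4 = matA a1 a2 ** matB b3 b4 ** matrix_inv (matA a1 a2) ** matrix_inv (matB b3 b4)"

definition permA :: "real^4^4" where
  "permA = vector [vector [0,0,1,0], vector [1,0,0,0],
                   vector [0,1,0,0], vector [0,0,0,1]]"

definition diag4 :: "real \<Rightarrow> real \<Rightarrow> real \<Rightarrow> real^4^4" where
  "diag4 l1 l2 l3 = vector [vector [l1,0,0,0], vector [0,l2,0,0],
                            vector [0,0,l3,0], vector [0,0,0,1]]"

end

theory Submission
  imports Defs
begin

(*
  The matrix AC fixes e1 and acts on R^4/<e1> through a 3x3 block of determinant 1, whose
  characteristic polynomial is m^3 - t m^2 + s m - 1 with t, s explicit in (w,x,y,z).  On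
  X - {(3,3,3,3)} both t and s exceed 3; hence all real roots of this cubic are positive and it
  has a simple real root l different from 1.  The l-eigenspace of AC is then a line, spanned by a
  vector q lifting the cross product of two rows of (block - l), i.e. a column of its adjugate.
  Conjugating AC by A gives CA, which commutes with AC (the peripheral subgroup is abelian), so A
  maps eigenlines of AC to eigenlines: q, Aq and A^2 q are eigenvectors.  An explicit determinant
  shows that together with e1 they form a basis, in which A is the cyclic permutation and AC is
  diagonal.
*)

unbundle cross3_syntax

section \<open>Inverses and eigenlines of real matrices\<close>

lemma matrix_inv_unique:
  fixes A X :: "'a::semiring_1^'n^'n"
  assumes "A ** X = mat 1" and "X ** A = mat 1"
  shows "matrix_inv A = X"
proof -
  have inv: "A ** matrix_inv A = mat 1 \<and> matrix_inv A ** A = mat 1"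
    unfolding matrix_inv_def by (rule someI[of _ X]) (use assms in blast)
  have "matrix_inv A = matrix_inv A ** (A ** X)"
    by (simp add: assms(1) matrix_mul_rid)
  also have "\<dots> = (matrix_inv A ** A) ** X"
    by (simp add: matrix_mul_assoc)
  also have "\<dots> = X"
    using inv by (simp add: matrix_mul_lid)
  finally show ?thesis .
qed

lemma matrix_inv_inverse:
  fixes A :: "'a::semiring_1^'n^'n"
  assumes "invertible A"
  shows "A ** matrix_inv A = mat 1" and "matrix_inv A ** A = mat 1"
proof -
  obtain X where "A ** X = mat 1" "X ** A = mat 1"
    using assms unfolding invertible_def by blast
  then show "A ** matrix_inv A = mat 1" "matrix_inv A ** A = mat 1"
    by (simp_all add: matrix_inv_unique)
qed

lemma conjugate_by_matrix_inv:
  fixes Q M D :: "'a::semiring_1^'n^'n"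
  assumes "invertible Q" and "M ** Q = Q ** D"
  shows "invertible (matrix_inv Q)" and "matrix_inv Q ** M ** matrix_inv (matrix_inv Q) = D"
proof -
  have inv_inv: "matrix_inv (matrix_inv Q) = Q"
    by (rule matrix_inv_unique) (simp_all add: matrix_inv_inverse[OF assms(1)])
  then show "invertible (matrix_inv Q)"
    unfolding invertible_def using matrix_inv_inverse[OF assms(1)] by blast
  have "matrix_inv Q ** M ** Q = (matrix_inv Q ** Q) ** D"
    by (simp add: assms(2) flip: matrix_mul_assoc)
  then show "matrix_inv Q ** M ** matrix_inv (matrix_inv Q) = D"
    by (simp add: inv_inv matrix_inv_inverse[OF assms(1)] matrix_mul_lid)
qed

lemma eigenvector_iff_null_vector:
  fixes T :: "real^'n^'n"
  shows "T *v v = m *\<^sub>R v \<longleftrightarrow> (T - m *\<^sub>R mat 1) *v v = 0"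
  by (simp add: matrix_vector_mult_diff_rdistrib flip: scaleR_matrix_vector_assoc)

lemma det_eq_0_if_null_vector:
  fixes K :: "real^'n^'n"
  assumes "K *v u = 0" and "u \<noteq> 0"
  shows "det K = 0"
  using assms invertible_det_nz invertible_left_inverse matrix_left_invertible_ker by metis

lemma commuting_matrix_preserves_eigenline:
  fixes T S :: "real^'n^'n"
  assumes "T ** S = S ** T" and "T *v q = l *\<^sub>R q"
    and line: "\<And>w. T *v w = l *\<^sub>R w \<Longrightarrow> \<exists>s. w = s *\<^sub>R q"
  shows "\<exists>\<mu>. S *v q = \<mu> *\<^sub>R q"
proof -
  have "T *v (S *v q) = S *v (T *v q)"
    by (simp add: matrix_vector_mul_assoc assms(1))
  also have "\<dots> = l *\<^sub>R (S *v q)"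
    by (simp add: assms(2) matrix_vector_mult_scaleR)
  finally show ?thesis using line by blast
qed

lemma order3_transports_eigenline:
  fixes A T :: "real^'n^'n"
  assumes A3: "A ** A ** A = mat 1"
    and comm: "T ** (A ** A ** T ** A) = (A ** A ** T ** A) ** T"
    and eig: "T *v q = l *\<^sub>R q" and line: "\<And>w. T *v w = l *\<^sub>R w \<Longrightarrow> \<exists>s. w = s *\<^sub>R q"
  shows "\<exists>\<mu>. T *v (A *v q) = \<mu> *\<^sub>R (A *v q)"
    and "\<exists>\<nu>. T *v (A *v (A *v q)) = \<nu> *\<^sub>R (A *v (A *v q))"
proof -
  have A3_right: "X ** A ** A ** A = X" for X
    by (metis A3 matrix_mul_assoc matrix_mul_rid)
  have A3_left: "A ** A ** A ** X = X" for X
    by (simp add: A3 matrix_mul_lid)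
  define S1 where "S1 = A ** A ** T ** A"
  define S2 where "S2 = A ** T ** A ** A"
  \<comment> \<open>conjugating \<open>comm\<close> by \<open>A\<close> shows that \<open>T\<close> also commutes with \<open>S2 = A T A\<^sup>-\<^sup>1\<close>\<close>
  have "A ** A ** (T ** S2) ** A = S1 ** T" and "A ** A ** (S2 ** T) ** A = T ** S1"
    by (simp_all add: S1_def S2_def matrix_mul_assoc A3_left A3_right)
  then have "A ** A ** (T ** S2) ** A = A ** A ** (S2 ** T) ** A"
    using comm by (simp add: S1_def)
  then have "A ** (A ** A ** (T ** S2) ** A) ** A ** A = A ** (A ** A ** (S2 ** T) ** A) ** A ** A"
    by simp
  then have comm2: "T ** S2 = S2 ** T"
    by (simp add: matrix_mul_assoc A3_left A3_right)
  obtain \<mu> where "S1 *v q = \<mu> *\<^sub>R q"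
    using commuting_matrix_preserves_eigenline[OF comm[folded S1_def] eig line] by blast
  then have "A *v (S1 *v q) = \<mu> *\<^sub>R (A *v q)"
    by (simp add: matrix_vector_mult_scaleR)
  then show "\<exists>\<mu>. T *v (A *v q) = \<mu> *\<^sub>R (A *v q)"
    by (auto simp: S1_def matrix_vector_mul_assoc matrix_mul_assoc A3_left)
  obtain \<nu> where "S2 *v q = \<nu> *\<^sub>R q"
    using commuting_matrix_preserves_eigenline[OF comm2 eig line] by blast
  then have "A *v (A *v (S2 *v q)) = \<nu> *\<^sub>R (A *v (A *v q))"
    by (simp add: matrix_vector_mult_scaleR)
  then show "\<exists>\<nu>. T *v (A *v (A *v q)) = \<nu> *\<^sub>R (A *v (A *v q))"
    by (auto simp: S2_def matrix_vector_mul_assoc matrix_mul_assoc A3_left)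
qed

section \<open>Null vectors of singular \<open>3 \<times> 3\<close> matrices\<close>

lemma vector_triple_product: "(x \<times> y) \<times> z = (x \<bullet> z) *\<^sub>R y - (y \<bullet> z) *\<^sub>R x"
  by (simp add: cross3_simps forall_3)

lemma null_vector_parallel_cross_rows:
  fixes K :: "real^3^3"
  assumes "K *v w = 0" and "K$i \<times> K$j \<noteq> 0"
  shows "\<exists>s. w = s *\<^sub>R (K$i \<times> K$j)"
proof -
  have "K$k \<bullet> w = 0" for k
    using assms(1) by (metis matrix_vector_mul_component zero_index)
  then have "(K$i \<times> K$j) \<times> w = 0"
    by (simp add: vector_triple_product)
  then show ?thesis
    using assms(2) by (auto simp: cross_eq_0 collinear_lemma)
qed

lemma cross_rows_in_null_space:
  fixes K :: "real^3^3"
  assumes "det K = 0"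
  shows "K *v (K$2 \<times> K$3) = 0"
  using assms by (simp add: cross3_simps matrix_vector_mult_def forall_3)

section \<open>\<open>4 \<times> 4\<close> matrices preserving the line through \<open>e\<^sub>1\<close>\<close>

text \<open>For such a matrix \<open>M\<close>, \<open>block3 M\<close> is the induced map on \<open>\<real>\<^sup>4 / \<langle>e\<^sub>1\<rangle>\<close>,
  and \<open>tail3\<close> is the quotient map.\<close>
definition e1_invariant :: "'a::zero^4^4 \<Rightarrow> bool" where
  "e1_invariant M \<longleftrightarrow> M$2$1 = 0 \<and> M$3$1 = 0 \<and> M$4$1 = 0"

definition tail3 :: "'a::zero^4 \<Rightarrow> 'a^3" where
  "tail3 v = vector [v$2, v$3, v$4]"

definition block3 :: "'a::zero^4^4 \<Rightarrow> 'a^3^3" where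
  "block3 M = vector [tail3 (M$2), tail3 (M$3), tail3 (M$4)]"

lemma vector_4 [simp]:
  "(vector [x1, x2, x3, x4] :: 'a::zero^4)$1 = x1"
  "(vector [x1, x2, x3, x4] :: 'a^4)$2 = x2"
  "(vector [x1, x2, x3, x4] :: 'a^4)$3 = x3"
  "(vector [x1, x2, x3, x4] :: 'a^4)$4 = x4"
  by (simp_all add: vector_def)

lemma tail3_index [simp]:
  "tail3 v $ 1 = v$2" "tail3 v $ 2 = v$3" "tail3 v $ 3 = v$4"
  by (simp_all add: tail3_def)

lemma block3_index [simp]:
  "block3 M $ 1 = tail3 (M$2)" "block3 M $ 2 = tail3 (M$3)" "block3 M $ 3 = tail3 (M$4)"
  by (simp_all add: block3_def)

lemma tail3_zero [simp]: "tail3 0 = 0"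
  by (simp add: vec_eq_iff forall_3)

lemma tail3_eq_0_iff: "tail3 v = 0 \<longleftrightarrow> v$2 = 0 \<and> v$3 = 0 \<and> v$4 = 0"
  by (simp add: vec_eq_iff forall_3)

lemma tail3_mult:
  fixes M :: "'a::comm_semiring_1^4^4"
  assumes "e1_invariant M"
  shows "tail3 (M *v v) = block3 M *v tail3 v"
  using assms
  by (simp add: e1_invariant_def vec_eq_iff forall_3 matrix_vector_mult_def sum_4 sum_3)

lemma e1_invariant_minus_scalar:
  fixes T :: "real^4^4"
  assumes "e1_invariant T"
  shows "e1_invariant (T - l *\<^sub>R mat 1)" and "block3 (T - l *\<^sub>R mat 1) = block3 T - l *\<^sub>R mat 1"
  using assms by (simp_all add: e1_invariant_def mat_def vec_eq_iff forall_3)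

lemma null_vector_lift:
  fixes M :: "real^4^4"
  assumes "e1_invariant M" and "M$1$1 \<noteq> 0" and "block3 M *v u = 0"
  shows "\<exists>q. M *v q = 0 \<and> tail3 q = u"
proof -
  define q :: "real^4" where
    "q = vector [- (M$1$2 * u$1 + M$1$3 * u$2 + M$1$4 * u$3) / M$1$1, u$1, u$2, u$3]"
  have "tail3 q = u"
    by (simp add: q_def vec_eq_iff forall_3)
  moreover have "M *v q = 0"
  proof -
    have "tail3 (M *v q) = 0"
      using assms(1,3) \<open>tail3 q = u\<close> by (simp add: tail3_mult)
    moreover have "(M *v q)$1 = 0"
      using assms(2) by (simp add: q_def matrix_vector_mult_def sum_4 field_simps)
    ultimately show ?thesis
      by (simp add: tail3_eq_0_iff) (simp add: vec_eq_iff forall_4)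
  qed
  ultimately show ?thesis by blast
qed

lemma null_vector_eq_0_if_tail3_eq_0:
  fixes M :: "real^4^4"
  assumes "M$1$1 \<noteq> 0" and "M *v v = 0" and "tail3 v = 0"
  shows "v = 0"
proof -
  have "(M *v v)$1 = M$1$1 * v$1"
    using assms(3) by (simp add: tail3_eq_0_iff matrix_vector_mult_def sum_4)
  then show ?thesis
    using assms by (simp add: tail3_eq_0_iff) (simp add: vec_eq_iff forall_4)
qed

lemma e1_invariant_eigenline:
  fixes T :: "real^4^4" and l :: real
  defines "K \<equiv> block3 T - l *\<^sub>R mat 1"
  assumes "e1_invariant T" and "l \<noteq> T$1$1" and "det K = 0" and "K$2 \<times> K$3 \<noteq> 0"
  obtains q where "T *v q = l *\<^sub>R q" and "tail3 q = K$2 \<times> K$3"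
    and "\<And>w. T *v w = l *\<^sub>R w \<Longrightarrow> \<exists>s. w = s *\<^sub>R q"
proof -
  define M where "M = T - l *\<^sub>R mat 1"
  have eig: "T *v w = l *\<^sub>R w \<longleftrightarrow> M *v w = 0" for w
    by (simp add: M_def eigenvector_iff_null_vector)
  have M: "e1_invariant M" "block3 M = K" "M$1$1 \<noteq> 0"
    using e1_invariant_minus_scalar[OF assms(2)] assms(3) by (simp_all add: M_def K_def mat_def)
  obtain q where q: "M *v q = 0" "tail3 q = K$2 \<times> K$3"
    using null_vector_lift[OF M(1,3)] cross_rows_in_null_space[OF assms(4)] M(2) by blast
  have "\<exists>s. w = s *\<^sub>R q" if "M *v w = 0" for w
  proof -
    have "K *v tail3 w = 0"
      using tail3_mult[OF M(1), of w] that M(2) by simp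
    then obtain s where s: "tail3 w = s *\<^sub>R (K$2 \<times> K$3)"
      using null_vector_parallel_cross_rows assms(5) by blast
    have "M *v (w - s *\<^sub>R q) = 0"
      using that q by (simp add: matrix_vector_mult_diff_distrib matrix_vector_mult_scaleR)
    moreover have "tail3 (w - s *\<^sub>R q) = 0"
      using s q by (simp add: vec_eq_iff forall_3)
    ultimately have "w - s *\<^sub>R q = 0"
      using null_vector_eq_0_if_tail3_eq_0 M(3) by blast
    then show ?thesis by auto
  qed
  then show ?thesis
    using that eig q by blast
qed

lemma eigenvalue_block3:
  fixes T :: "real^4^4"
  assumes "e1_invariant T" and "T *v v = m *\<^sub>R v" and "tail3 v \<noteq> 0"
  shows "det (block3 T - m *\<^sub>R mat 1) = 0"
proof -
  have "(block3 T - m *\<^sub>R mat 1) *v tail3 v = tail3 ((T - m *\<^sub>R mat 1) *v v)"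
    using e1_invariant_minus_scalar[OF assms(1)] by (simp add: tail3_mult)
  also have "\<dots> = 0"
    using assms(2) by (simp add: eigenvector_iff_null_vector)
  finally show ?thesis
    using det_eq_0_if_null_vector assms(3) by blast
qed

lemma transpose_vector_4_mult:
  fixes M :: "'a::comm_semiring_1^4^4"
  shows "M ** transpose (vector [v1, v2, v3, v4] :: 'a^4^4) =
    transpose (vector [M *v v1, M *v v2, M *v v3, M *v v4] :: 'a^4^4)"
  by (simp add: vec_eq_iff forall_4 transpose_def matrix_matrix_mult_def matrix_vector_mult_def sum_4)

lemma transpose_vector_4_mult_permA:
  "transpose (vector [v1, v2, v3, v4]) ** permA = transpose (vector [v2, v3, v1, v4])"
  by (simp add: vec_eq_iff forall_4 transpose_def matrix_matrix_mult_def permA_def sum_4)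

lemma transpose_vector_4_mult_diag4:
  "transpose (vector [v1, v2, v3, v4]) ** diag4 l1 l2 l3 =
    transpose (vector [l1 *\<^sub>R v1, l2 *\<^sub>R v2, l3 *\<^sub>R v3, v4])"
  by (simp add: vec_eq_iff forall_4 transpose_def matrix_matrix_mult_def diag4_def sum_4)

lemma invertible_columns_e1:
  fixes v1 v2 v3 :: "real^4"
  assumes "det (vector [tail3 v1, tail3 v2, tail3 v3] :: real^3^3) \<noteq> 0"
  shows "invertible (transpose (vector [v1, v2, v3, axis 1 1] :: real^4^4))"
proof -
  have "x = 0" if "transpose (vector [v1, v2, v3, axis 1 1] :: real^4^4) *v x = 0" for x
  proof -
    define W :: "real^3^3" where "W = vector [tail3 v1, tail3 v2, tail3 v3]"
    define y :: "real^3" where "y = vector [x$1, x$2, x$3]"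
    have comps: "x$1 * v1$i + x$2 * v2$i + x$3 * v3$i + x$4 * axis 1 1 $ i = 0" for i
      using that unfolding vec_eq_iff
      by (simp add: transpose_def matrix_vector_mult_def sum_4 mult.commute)
    have "transpose W *v y = 0"
      using comps[of 2] comps[of 3] comps[of 4]
      by (simp add: W_def y_def vec_eq_iff forall_3 transpose_def matrix_vector_mult_def sum_3
          axis_def mult.commute)
    moreover have "det (transpose W) \<noteq> 0"
      using assms by (simp add: W_def det_transpose)
    ultimately have "y = 0"
      using det_eq_0_if_null_vector by blast
    then have "x$1 = 0" "x$2 = 0" "x$3 = 0"
      by (simp_all add: y_def vec_eq_iff forall_3)
    then show "x = 0"
      using comps[of 1] by (simp add: vec_eq_iff forall_4 axis_def)
  qed
  then show ?thesis
    unfolding invertible_left_inverse matrix_left_invertible_ker by blast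
qed

section \<open>The characteristic cubic\<close>

definition cubic :: "real \<Rightarrow> real \<Rightarrow> real \<Rightarrow> real" where
  "cubic t s m = m^3 - t * m^2 + s * m - 1"

definition cubic_deriv :: "real \<Rightarrow> real \<Rightarrow> real \<Rightarrow> real" where
  "cubic_deriv t s m = 3 * m^2 - 2 * t * m + s"

lemma cubic_root_pos:
  assumes "0 < t" and "0 < s" and "cubic t s m = 0"
  shows "0 < m"
proof (rule ccontr)
  assume "\<not> 0 < m"
  then have "m^3 \<le> 0" and "0 \<le> t * m^2" and "s * m \<le> 0"
    using assms(1,2) by (simp_all add: power_le_zero_eq mult_nonneg_nonpos)
  then show False
    using assms(3) unfolding cubic_def by linarith
qed

lemma cubic_at_1: "cubic t s 1 = s - t"
  by (simp add: cubic_def)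

text \<open>Since the roots sum to \<open>t\<close>, the third root beside a double root \<open>l\<close> is \<open>t - 2 l\<close>.\<close>
lemma cubic_double_root:
  assumes "cubic t s l = 0" and "cubic_deriv t s l = 0"
  shows "cubic t s (t - 2*l) = 0" and "cubic_deriv t s (t - 2*l) = (t - 3*l)^2"
    and "t = 3*l \<Longrightarrow> l = 1"
proof -
  show "cubic t s (t - 2*l) = 0" "cubic_deriv t s (t - 2*l) = (t - 3*l)^2"
    using assms unfolding cubic_def cubic_deriv_def by algebra+
  assume "t = 3*l"
  then have "l^3 = 1"
    using assms unfolding cubic_def cubic_deriv_def by algebra
  moreover have "\<bar>l\<bar> = 1"
    using power_eq_1_iff[of l 3] \<open>l^3 = 1\<close> by simp
  ultimately show "l = 1"
    by (auto simp: abs_if split: if_splits)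
qed

lemma cubic_simple_root:
  assumes "3 < t" and "3 < s"
  obtains l where "cubic t s l = 0" and "l \<noteq> 1" and "cubic_deriv t s l \<noteq> 0"
proof (cases "s = t")
  case True
  define r where "r = sqrt ((t - 1)^2 - 4)"
  define l where "l = (t - 1 + r) / 2"
  have "(t - 1)^2 > 2^2"
    using assms(1) by (intro power_strict_mono) auto
  then have "0 < r" and r2: "r^2 = (t - 1)^2 - 4"
    by (simp_all add: r_def)
  have quadratic: "l^2 - (t - 1) * l + 1 = 0"
    using r2 by (simp add: l_def power2_eq_square field_simps)
  have "cubic t s l = (l - 1) * (l^2 - (t - 1) * l + 1)"
    using True by (simp add: cubic_def power2_eq_square power3_eq_cube algebra_simps)
  moreover have "cubic_deriv t s l = (l - 1) * r + (l^2 - (t - 1) * l + 1)"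
    using True by (simp add: cubic_deriv_def l_def power2_eq_square field_simps)
  moreover have "l \<noteq> 1"
    using quadratic assms(1) by auto
  ultimately show ?thesis
    using that quadratic \<open>0 < r\<close> by simp
next
  case False
  have "cubic t s t = s * t - 1"
    by (simp add: cubic_def power2_eq_square power3_eq_cube)
  moreover have "3 * 3 < s * t"
    using assms by (intro mult_strict_mono) auto
  ultimately have "cubic t s 0 \<le> 0" and "0 \<le> cubic t s t"
    by (simp_all add: cubic_def)
  moreover have "continuous_on {0..t} (cubic t s)"
    unfolding cubic_def by (intro continuous_intros)
  ultimately obtain l where root: "cubic t s l = 0"
    using IVT'[of "cubic t s" 0 0 t] assms(1) by auto
  have not_1: "cubic t s m = 0 \<Longrightarrow> m \<noteq> 1" for m
    using False by (auto simp: cubic_at_1)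
  show ?thesis
  proof (cases "cubic_deriv t s l = 0")
    case True
    note other = cubic_double_root[OF root True]
    have "t \<noteq> 3*l"
      using other(3) not_1[OF root] by blast
    then show ?thesis
      using that[of "t - 2*l"] other(1,2) not_1[OF other(1)] by simp
  next
    case False
    then show ?thesis
      using that root not_1 by blast
  qed
qed

section \<open>The component \<open>X\<close>\<close>

lemma quadratic_form_pos:
  fixes a b :: real
  assumes "a \<noteq> 0 \<or> b \<noteq> 0"
  shows "a^2 - a*b + b^2 > 0"
proof -
  have "4 * (a^2 - a*b + b^2) = (2*a - b)^2 + 3 * b^2"
    by algebra
  moreover have "(2*a - b)^2 + 3 * b^2 > 0"
    using assms by (cases "b = 0") (simp_all add: add_nonneg_pos)
  ultimately show ?thesis by (smt (verit))
qed

lemma Xvar_identities: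
  fixes w x y z :: real
  assumes "(w, x, y, z) \<in> Xvar"
  shows "z * (w*x - w - x) = w * (w + x - 3)" and "y * (w*x - w - x) = x * (w + x - 3)"
  using assms unfolding Xvar_def by auto algebra+

lemma Xvar_key_identity:
  fixes w x y z :: real
  assumes "(w, x, y, z) \<in> Xvar"
  shows "(z - 1) * (w*x - w - x) = (w - 1)^2 + (x - 1)"
  using Xvar_identities(1)[OF assms] by algebra

lemma Xvar_pos:
  fixes w x y z :: real
  assumes "(w, x, y, z) \<in> Xvar" and "1 < x" and "1 < z"
  shows "0 < w*x - w - x"
proof -
  have "0 < (z - 1) * (w*x - w - x)"
    using Xvar_key_identity[OF assms(1)] assms(2) by (simp add: add_nonneg_pos)
  then show ?thesis
    using assms(3) by (simp add: zero_less_mult_iff)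
qed

lemma Xvar_bounds_iff:
  fixes w x y z :: real
  assumes "(w, x, y, z) \<in> Xvar"
  shows "1 < x \<and> 1 < z \<longleftrightarrow> 1 \<le> x \<and> 0 \<le> w*x - w - x"
proof -
  note key = Xvar_key_identity[OF assms]
  show ?thesis
  proof
    assume "1 < x \<and> 1 < z"
    then show "1 \<le> x \<and> 0 \<le> w*x - w - x"
      using Xvar_pos[OF assms] by simp
  next
    assume *: "1 \<le> x \<and> 0 \<le> w*x - w - x"
    then have "1 < x"
      by (cases "x = 1") auto
    then have "0 < (z - 1) * (w*x - w - x)"
      using key by (simp add: add_nonneg_pos)
    then show "1 < x \<and> 1 < z"
      using * \<open>1 < x\<close> by (auto simp: zero_less_mult_iff)
  qed
qed

text \<open>On \<open>Xvar\<close> the open condition \<open>x, z > 1\<close> agrees with a closed one, so it holds on the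
  whole component of \<open>(3, 3, 3, 3)\<close>.\<close>
lemma Xcomp_bounds:
  assumes "(w, x, y, z) \<in> Xcomp"
  shows "1 < x" and "1 < z"
proof -
  define U where "U = {p :: real \<times> real \<times> real \<times> real. 1 < fst (snd p) \<and> 1 < snd (snd (snd p))}"
  define F where "F = {p :: real \<times> real \<times> real \<times> real.
                         1 \<le> fst (snd p) \<and> 0 \<le> fst p * fst (snd p) - fst p - fst (snd p)}"
  have "open U"
    unfolding U_def by (intro open_Collect_conj open_Collect_less continuous_intros)
  have "closed F"
    unfolding F_def by (intro closed_Collect_conj closed_Collect_le continuous_intros)
  have sub: "Xcomp \<subseteq> Xvar"
    unfolding Xcomp_def by (rule connected_component_subset)
  have "p \<in> U \<longleftrightarrow> p \<in> F" if "p \<in> Xvar" for p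
    using that by (cases p) (simp add: U_def F_def Xvar_bounds_iff)
  then have "Xvar \<inter> U = Xvar \<inter> F"
    by blast
  then have "Xcomp \<inter> U = Xcomp \<inter> F"
    using sub by blast
  then have "closedin (top_of_set Xcomp) (Xcomp \<inter> U)"
    using \<open>closed F\<close> by (simp add: closedin_closed_Int)
  moreover have "openin (top_of_set Xcomp) (Xcomp \<inter> U)"
    using \<open>open U\<close> by (simp add: openin_open_Int)
  moreover have "connected Xcomp"
    unfolding Xcomp_def by (rule connected_connected_component)
  moreover have "(3, 3, 3, 3) \<in> Xcomp \<inter> U"
    by (simp add: Xcomp_def Xvar_def U_def)
  ultimately have "Xcomp \<inter> U = Xcomp"
    unfolding connected_clopen by blast
  then have "(w, x, y, z) \<in> U"
    using assms by blast
  then show "1 < x" "1 < z"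
    by (simp_all add: U_def)
qed

text \<open>The trace of the \<open>3 \<times> 3\<close> block of \<open>\<rho>(\<alpha>\<gamma>)\<close> and of its inverse, in the
  coordinates \<open>(w, x, y, z)\<close>.\<close>
definition trace3 :: "real \<Rightarrow> real \<Rightarrow> real \<Rightarrow> real \<Rightarrow> real" where
  "trace3 w x y z = w + z - 2*x - 2*y + x*y"

definition trace3_inv :: "real \<Rightarrow> real \<Rightarrow> real \<Rightarrow> real \<Rightarrow> real" where
  "trace3_inv w x y z = x + y - 2*w - 2*z + w*z"

lemma Xcomp_traces_gt_3:
  assumes "(w, x, y, z) \<in> Xcomp - {(3, 3, 3, 3)}"
  shows "trace3 w x y z > 3" and "trace3_inv w x y z > 3"
proof -
  define D where "D = w*x - w - x"
  define Q where "Q = (w - 3)^2 - (w - 3) * (x - 3) + (x - 3)^2"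
  have X: "(w, x, y, z) \<in> Xvar"
    using assms unfolding Xcomp_def using connected_component_subset by blast
  note eqs = Xvar_identities[OF X, folded D_def]
  have "1 < x" "1 < z"
    using assms Xcomp_bounds by auto
  then have "0 < D"
    using Xvar_pos[OF X] by (simp add: D_def)
  then have "0 < (w - 1) * (x - 1)"
    by (simp add: D_def algebra_simps)
  then have "1 < w"
    using \<open>1 < x\<close> by (simp add: zero_less_mult_iff)
  have "w \<noteq> 3 \<or> x \<noteq> 3"
  proof (rule ccontr)
    assume "\<not> (w \<noteq> 3 \<or> x \<noteq> 3)"
    then have "w = 3" "x = 3" "D = 3"
      by (auto simp: D_def)
    then show False
      using eqs assms by simp
  qed
  then have "0 < Q"
    unfolding Q_def using quadratic_form_pos by simp
  have "D * (trace3 w x y z - 3) = x * Q" and "D * (trace3_inv w x y z - 3) = w * Q"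
    using eqs unfolding trace3_def trace3_inv_def D_def Q_def by algebra+
  moreover have "0 < x * Q" and "0 < w * Q"
    using \<open>0 < Q\<close> \<open>1 < x\<close> \<open>1 < w\<close> by simp_all
  ultimately have "0 < D * (trace3 w x y z - 3)" and "0 < D * (trace3_inv w x y z - 3)"
    by simp_all
  then show "trace3 w x y z > 3" and "trace3_inv w x y z > 3"
    using \<open>0 < D\<close> by (simp_all add: zero_less_mult_iff)
qed

section \<open>The holonomy of \<open>\<alpha>\<close> and \<open>\<alpha>\<gamma>\<close>\<close>

lemma mat4_eq_iff: "(M::'a^4^4) = N \<longleftrightarrow> (\<forall>i\<in>{1,2,3,4}. \<forall>j\<in>{1,2,3,4}. M$i$j = N$i$j)"
  by (auto simp: vec_eq_iff forall_4)

definition matAC :: "real \<Rightarrow> real \<Rightarrow> real \<Rightarrow> real \<Rightarrow> real^4^4" where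
  "matAC a1 a2 b3 b4 = vector [
     vector [1, a2*b3 + a1*b4 - 3*a1*b3 + a1^2*b3^2, a2 - 2*a1 + a1^2*b3, a1],
     vector [0, 1 + a2*b4 - 2*a2*b3 - a1*b3 + a1*a2*b3^2, a1*a2*b3 - a1 - a2, a2],
     vector [0, b3 - 2*b4 + a1*b3*b4 - a1*b3^2, a1*b4 - a1*b3, -1],
     vector [0, 2*b3 - b4 - a1*b3^2, 1 - a1*b3, -1]]"

lemma matA_cube: "matA a1 a2 ** matA a1 a2 ** matA a1 a2 = mat 1"
  by (simp add: mat4_eq_iff matA_def matrix_matrix_mult_def sum_4 mat_def algebra_simps)

lemma matB_cube: "matB b3 b4 ** matB b3 b4 ** matB b3 b4 = mat 1"
  by (simp add: mat4_eq_iff matB_def matrix_matrix_mult_def sum_4 mat_def algebra_simps)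

lemma matrix_inv_matA: "matrix_inv (matA a1 a2) = matA a1 a2 ** matA a1 a2"
  by (rule matrix_inv_unique) (simp_all add: matA_cube matrix_mul_assoc)

lemma matrix_inv_matB: "matrix_inv (matB b3 b4) = matB b3 b4 ** matB b3 b4"
  by (rule matrix_inv_unique) (simp_all add: matB_cube matrix_mul_assoc)

lemma matA_mult_matC: "matA a1 a2 ** matC a1 a2 b3 b4 = matAC a1 a2 b3 b4"
  unfolding matC_def matrix_inv_matA matrix_inv_matB
  by (simp add: mat4_eq_iff matA_def matB_def matAC_def matrix_matrix_mult_def sum_4
      power2_eq_square algebra_simps)

text \<open>Since \<open>A\<^sup>-\<^sup>1 (A C) A = C A\<close>, this is the commutation of \<open>\<rho>(\<alpha>\<gamma>)\<close> and \<open>\<rho>(\<gamma>\<alpha>)\<close>.\<close>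
lemma matAC_commutes:
  fixes a1 a2 b3 b4 :: real
  defines "A \<equiv> matA a1 a2" and "T \<equiv> matAC a1 a2 b3 b4"
  assumes rel: "(a1 + a2) * (b3 + b4) = 3 + a1 * a2 * b3 * b4"
  shows "T ** (A ** A ** T ** A) = (A ** A ** T ** A) ** T"
  using rel unfolding A_def T_def
  by (simp add: mat4_eq_iff matA_def matAC_def matrix_matrix_mult_def sum_4 power2_eq_square
      algebra_simps)
     (intro conjI; algebra)

lemma e1_invariant_matA: "e1_invariant (matA a1 a2)"
  by (simp add: e1_invariant_def matA_def)

lemma e1_invariant_matAC: "e1_invariant (matAC a1 a2 b3 b4)"
  by (simp add: e1_invariant_def matAC_def)

lemma matAC_11: "matAC a1 a2 b3 b4 $1$1 = 1"
  by (simp add: matAC_def)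

lemma matA_axis_1: "matA a1 a2 *v axis 1 1 = axis 1 1"
  by (simp add: vec_eq_iff forall_4 matA_def matrix_vector_mult_def sum_4 axis_def)

lemma matAC_axis_1: "matAC a1 a2 b3 b4 *v axis 1 1 = axis 1 1"
  by (simp add: vec_eq_iff forall_4 matAC_def matrix_vector_mult_def sum_4 axis_def)

lemma det_block3_matAC:
  "det (block3 (matAC a1 a2 b3 b4) - m *\<^sub>R mat 1) =
     - cubic (trace3 (a1*b4) (a1*b3) (a2*b3) (a2*b4)) (trace3_inv (a1*b4) (a1*b3) (a2*b3) (a2*b4)) m"
  by (simp add: det_3 block3_def tail3_def matAC_def mat_def cubic_def trace3_def trace3_inv_def)
     algebra

text \<open>The linear form on \<open>\<real>\<^sup>4 / \<langle>e\<^sub>1\<rangle>\<close> fixed by \<open>matA\<close>.\<close>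
definition invariant_form :: "real \<Rightarrow> real^3 \<Rightarrow> real" where
  "invariant_form a2 u = 3 * u$1 + a2 * u$2 + a2 * u$3"

lemma invariant_form_adjugate_column:
  fixes a1 a2 b3 b4 m :: real
  defines "K \<equiv> block3 (matAC a1 a2 b3 b4) - m *\<^sub>R mat 1"
  shows "invariant_form a2 (K$2 \<times> K$3) =
     cubic_deriv (trace3 (a1*b4) (a1*b3) (a2*b3) (a2*b4)) (trace3_inv (a1*b4) (a1*b3) (a2*b3) (a2*b4)) m
     - (m + 1) * ((a1 + a2) * (b3 + b4) - 3 - a1 * a2 * b3 * b4)"
  unfolding K_def
  by (simp add: cross3_def invariant_form_def block3_def tail3_def matAC_def mat_def cubic_deriv_def
      trace3_def trace3_inv_def)
     algebra

lemma det_orbit_matA: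
  fixes a1 a2 :: real and c :: "real^3"
  defines "A' \<equiv> block3 (matA a1 a2)"
  shows "det (vector [c, A' *v c, A' *v (A' *v c)]) =
    invariant_form a2 c * ((c$2)^2 - c$2 * c$3 + (c$3)^2)"
  unfolding A'_def
  by (simp add: det_3 invariant_form_def block3_def tail3_def matA_def matrix_vector_mult_def sum_3)
     algebra

lemma null_vector_block3_matAC:
  assumes "1 < a1 * b3" and "(block3 (matAC a1 a2 b3 b4) - l *\<^sub>R mat 1) *v c = 0" and "c \<noteq> 0"
  shows "c$2 \<noteq> 0 \<or> c$3 \<noteq> 0"
proof (rule ccontr)
  assume c23: "\<not> (c$2 \<noteq> 0 \<or> c$3 \<noteq> 0)"
  then have "c$1 \<noteq> 0"
    using assms(3) by (auto simp: vec_eq_iff forall_3)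
  then have "b3 - 2*b4 + a1*b3*b4 - a1*b3^2 = 0" and "2*b3 - b4 - a1*b3^2 = 0"
    using assms(2) c23
    by (auto simp: vec_eq_iff forall_3 matrix_vector_mult_def sum_3 block3_def tail3_def matAC_def mat_def)
  moreover have "b3 * ((a1*b3 - 1)^2 - (a1*b3 - 1) * 1 + 1^2) =
      - (b3 - 2*b4 + a1*b3*b4 - a1*b3^2) - (a1*b3 - 2) * (2*b3 - b4 - a1*b3^2)"
    by (simp add: power2_eq_square algebra_simps)
  ultimately have "b3 * ((a1*b3 - 1)^2 - (a1*b3 - 1) * 1 + 1^2) = 0"
    by simp
  moreover have "(a1*b3 - 1)^2 - (a1*b3 - 1) * 1 + 1^2 > 0"
    by (rule quadratic_form_pos) simp
  moreover have "b3 \<noteq> 0"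
    using assms(1) by auto
  ultimately show False
    by simp
qed

lemma matAC_eigenvalue_pos:
  assumes "(a1*b4, a1*b3, a2*b3, a2*b4) \<in> Xcomp - {(3, 3, 3, 3)}"
    and "matAC a1 a2 b3 b4 *v v = m *\<^sub>R v" and "tail3 v \<noteq> 0"
  shows "0 < m"
proof -
  have "cubic (trace3 (a1*b4) (a1*b3) (a2*b3) (a2*b4)) (trace3_inv (a1*b4) (a1*b3) (a2*b3) (a2*b4)) m = 0"
    using eigenvalue_block3[OF e1_invariant_matAC assms(2,3)] by (simp add: det_block3_matAC)
  then show ?thesis
    by (rule cubic_root_pos[rotated 2]) (use Xcomp_traces_gt_3[OF assms(1)] in simp_all)
qed

lemma matAC_simple_eigenline:
  fixes a1 a2 b3 b4 :: real
  defines "T \<equiv> matAC a1 a2 b3 b4" and "A \<equiv> matA a1 a2"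
  assumes rel: "(a1 + a2) * (b3 + b4) = 3 + a1 * a2 * b3 * b4"
    and inX: "(a1*b4, a1*b3, a2*b3, a2*b4) \<in> Xcomp - {(3, 3, 3, 3)}"
  obtains l q where "T *v q = l *\<^sub>R q" and "l \<noteq> 1"
    and "\<And>w. T *v w = l *\<^sub>R w \<Longrightarrow> \<exists>s. w = s *\<^sub>R q"
    and "det (vector [tail3 q, tail3 (A *v q), tail3 (A *v (A *v q))] :: real^3^3) \<noteq> 0"
proof -
  define t where "t = trace3 (a1*b4) (a1*b3) (a2*b3) (a2*b4)"
  define s where "s = trace3_inv (a1*b4) (a1*b3) (a2*b3) (a2*b4)"
  obtain l where root: "cubic t s l = 0" "l \<noteq> 1" "cubic_deriv t s l \<noteq> 0"
    using cubic_simple_root Xcomp_traces_gt_3[OF inX] unfolding t_def s_def by metis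
  define K where "K = block3 T - l *\<^sub>R mat 1"
  define c where "c = K$2 \<times> K$3"
  have "det K = 0"
    using root(1) by (simp add: K_def T_def det_block3_matAC t_def s_def)
  have "invariant_form a2 c = cubic_deriv t s l - (l + 1) * ((a1 + a2) * (b3 + b4) - 3 - a1 * a2 * b3 * b4)"
    unfolding c_def K_def T_def t_def s_def by (rule invariant_form_adjugate_column)
  then have "invariant_form a2 c \<noteq> 0"
    using root(3) rel by simp
  then have "c \<noteq> 0"
    by (auto simp: invariant_form_def)
  obtain q where q: "T *v q = l *\<^sub>R q" "tail3 q = c" "\<And>w. T *v w = l *\<^sub>R w \<Longrightarrow> \<exists>s. w = s *\<^sub>R q"
    using e1_invariant_eigenline[of T l] \<open>det K = 0\<close> \<open>c \<noteq> 0\<close> root(2)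
    unfolding K_def c_def T_def by (metis e1_invariant_matAC matAC_11)
  have "1 < a1 * b3"
    using inX Xcomp_bounds(1) by blast
  then have "c$2 \<noteq> 0 \<or> c$3 \<noteq> 0"
    using null_vector_block3_matAC cross_rows_in_null_space \<open>det K = 0\<close> \<open>c \<noteq> 0\<close>
    unfolding c_def K_def T_def by blast
  then have "0 < (c$2)^2 - c$2 * c$3 + (c$3)^2"
    by (rule quadratic_form_pos)
  moreover have "tail3 (A *v q) = block3 A *v c" "tail3 (A *v (A *v q)) = block3 A *v (block3 A *v c)"
    using q(2) by (simp_all add: A_def tail3_mult e1_invariant_matA)
  ultimately have "det (vector [tail3 q, tail3 (A *v q), tail3 (A *v (A *v q))] :: real^3^3) \<noteq> 0"
    using \<open>invariant_form a2 c \<noteq> 0\<close> q(2) by (simp add: A_def det_orbit_matA)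
  then show ?thesis
    using that q root(2) by blast
qed

lemma matAC_eigenbasis:
  fixes a1 a2 b3 b4 :: real
  defines "T \<equiv> matAC a1 a2 b3 b4" and "A \<equiv> matA a1 a2"
  assumes rel: "(a1 + a2) * (b3 + b4) = 3 + a1 * a2 * b3 * b4"
    and inX: "(a1*b4, a1*b3, a2*b3, a2*b4) \<in> Xcomp - {(3, 3, 3, 3)}"
  obtains Q l \<mu> \<nu> where "invertible Q" and "A ** Q = Q ** permA" and "T ** Q = Q ** diag4 l \<mu> \<nu>"
    and "0 < l" and "0 < \<mu>" and "0 < \<nu>" and "l \<noteq> 1"
proof -
  obtain l q where eig: "T *v q = l *\<^sub>R q" and "l \<noteq> 1"
    and line: "\<And>w. T *v w = l *\<^sub>R w \<Longrightarrow> \<exists>s. w = s *\<^sub>R q"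
    and det: "det (vector [tail3 q, tail3 (A *v q), tail3 (A *v (A *v q))] :: real^3^3) \<noteq> 0"
    using matAC_simple_eigenline[OF rel inX] unfolding A_def T_def by blast
  obtain \<mu> \<nu> where "T *v (A *v q) = \<mu> *\<^sub>R (A *v q)" "T *v (A *v (A *v q)) = \<nu> *\<^sub>R (A *v (A *v q))"
    using order3_transports_eigenline[of A T, OF _ _ eig line] matA_cube matAC_commutes[OF rel]
    unfolding A_def T_def by blast
  moreover have "tail3 q \<noteq> 0" "tail3 (A *v q) \<noteq> 0" "tail3 (A *v (A *v q)) \<noteq> 0"
    using det by (auto simp: det_3 tail3_eq_0_iff)
  ultimately have "0 < l" "0 < \<mu>" "0 < \<nu>"
    using eig matAC_eigenvalue_pos[OF inX] unfolding T_def by blast+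
  define Q where "Q = transpose (vector [q, A *v q, A *v (A *v q), axis 1 1] :: real^4^4)"
  have "invertible Q"
    using invertible_columns_e1[OF det] by (simp add: Q_def)
  have "A ** Q = Q ** permA"
    by (simp add: Q_def A_def transpose_vector_4_mult transpose_vector_4_mult_permA matA_axis_1
        matrix_vector_mul_assoc matrix_mul_assoc matA_cube)
  have "T ** Q = Q ** diag4 l \<mu> \<nu>"
    using eig \<open>T *v (A *v q) = \<mu> *\<^sub>R (A *v q)\<close> \<open>T *v (A *v (A *v q)) = \<nu> *\<^sub>R (A *v (A *v q))\<close>
    by (simp add: Q_def T_def matAC_axis_1 transpose_vector_4_mult transpose_vector_4_mult_diag4)
  then show ?thesis
    using that \<open>invertible Q\<close> \<open>A ** Q = Q ** permA\<close> \<open>0 < l\<close> \<open>0 < \<mu>\<close> \<open>0 < \<nu>\<close> \<open>l \<noteq> 1\<close>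
    by blast
qed

theorem lemma3p3:
  fixes a1 a2 b3 b4 :: real
  assumes rel: "(a1 + a2) * (b3 + b4) = 3 + a1 * a2 * b3 * b4"
    and inX: "(a1*b4, a1*b3, a2*b3, a2*b4) \<in> Xcomp - {(3,3,3,3)}"
  shows "\<exists>P :: real^4^4. \<exists>l1 l2 l3 :: real.
           invertible P \<and>
           P ** matA a1 a2 ** matrix_inv P = permA \<and>
           P ** (matA a1 a2 ** matC a1 a2 b3 b4) ** matrix_inv P = diag4 l1 l2 l3 \<and>
           l1 > 0 \<and> l2 > 0 \<and> l3 > 0 \<and> l1 \<noteq> 1 \<and> l1 \<noteq> -1"
proof -
  obtain Q l \<mu> \<nu> where "invertible Q" and AQ: "matA a1 a2 ** Q = Q ** permA"
    and TQ: "matAC a1 a2 b3 b4 ** Q = Q ** diag4 l \<mu> \<nu>"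
    and "0 < l" and "0 < \<mu>" and "0 < \<nu>" and "l \<noteq> 1"
    using matAC_eigenbasis[OF rel inX] by blast
  have "invertible (matrix_inv Q)"
    and "matrix_inv Q ** matA a1 a2 ** matrix_inv (matrix_inv Q) = permA"
    and "matrix_inv Q ** matAC a1 a2 b3 b4 ** matrix_inv (matrix_inv Q) = diag4 l \<mu> \<nu>"
    using conjugate_by_matrix_inv[OF \<open>invertible Q\<close>] AQ TQ by blast+
  then show ?thesis
    using \<open>0 < l\<close> \<open>0 < \<mu>\<close> \<open>0 < \<nu>\<close> \<open>l \<noteq> 1\<close>
    unfolding matA_mult_matC
    by (intro exI[of _ "matrix_inv Q"] exI[of _ l] exI[of _ \<mu>] exI[of _ \<nu>]) simp
qed

end
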